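(* Let $\lambda>0$, let $E_1,E_2,\ldots$ be i.i.d. $\text{Exp}(\lambda)$ random variables, and let $$X=\prod_{i=1}^{\infty}\min\left\{\sum_{k=1}^iE_k,1\right\}.$$ Then, as $t\to 0^+$, $$\log\mathbb{P}(X\le t)=-\left(\sqrt{-\log t}-\sqrt{\lambda}\right)^2+O\left(\log(-\log t)\right).$$
   Context: $\text{Exp}(\lambda)$ denotes the exponential distribution with rate $\lambda$ (mean $1/\lambda$). The $O(\cdot)$ term may depend on $\lambda$. *)

theory Defs
  imports "HOL-Probability.Probability" "HOL-Library.Landau_Symbols"
begin

text \<open>Indices are 0-based: factor i uses S_i = E_0 + ... + E_i.\<close>
definition prod_min_partial_sums :: "(nat \<Rightarrow> 'a \<Rightarrow> real) \<Rightarrow> 'a \<Rightarrow> real" where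
  "prod_min_partial_sums E \<omega> = lim (\<lambda>n. \<Prod>i<n. min (\<Sum>k\<le>i. E k \<omega>) 1)"

end

theory Submission
  imports Defs
begin

text \<open>Write S_m = E_0 + ... + E_m and L = -log t, and let l be the rate. The factors
  min(S_i, 1) equal S_i as long as S_i < 1, so X \<le> t essentially means S_0 \<cdot> ... \<cdot> S_m \<le> t for
  some m with S_m < 1. Given S_m, the ratios S_i / S_m (i < m) are uniform order statistics,
  so S_0 \<cdot> ... \<cdot> S_m = S_m^(m+1) V_m, where S_m is Gamma(m+1, l) distributed and independent of
  V_m, a product of m independent uniform variables. Markov's inequality for V_m^(-s), summed
  over m, gives P(X \<le> t) \<le> (2t)^s e^(l/(1-s)), and s = 1 - sqrt(l/L) yields the upper bound.
  Conversely P(X \<le> t) \<ge> P(S_(m+1) < 1) P(V_(m+1) \<le> t) \<ge> e^(-l) l^(m+2)/(m+2)! \<cdot> t L^m/m!,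
  and for m + 2 \<approx> sqrt(l L) Stirling's bound turns this into the lower bound.\<close>

section \<open>Products of independent uniform variables\<close>

primrec uniform_product :: "nat \<Rightarrow> real measure" where
  "uniform_product 0 = return borel 1"
| "uniform_product (Suc m) =
     distr (uniform_product m \<Otimes>\<^sub>M uniform_measure lborel {0..1}) borel (\<lambda>(v, u). v * u)"

lemma sets_uniform_product [measurable_cong, simp]: "sets (uniform_product m) = sets borel"
  by (cases m) auto

lemma space_uniform_product [simp]: "space (uniform_product m) = UNIV"
  using sets_eq_imp_space_eq[OF sets_uniform_product[of m]] by simp

lemma prob_space_uniform_product: "prob_space (uniform_product m)"
proof (induction m)
  case 0
  then show ?case by (simp add: prob_space_return)
next
  case (Suc m)
  interpret A: prob_space "uniform_product m" by fact
  interpret B: prob_space "uniform_measure lborel {0..1::real}"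
    by (rule prob_space_uniform_measure) auto
  interpret P: pair_prob_space "uniform_product m" "uniform_measure lborel {0..1::real}" ..
  show ?case by simp (rule P.prob_space_distr, measurable)
qed

lemma nn_integral_uniform_product_Suc:
  assumes [measurable]: "f \<in> borel_measurable borel"
  shows "(\<integral>\<^sup>+w. f w \<partial>uniform_product (Suc m))
       = (\<integral>\<^sup>+u. indicator {0..1} u * (\<integral>\<^sup>+v. f (v * u) \<partial>uniform_product m) \<partial>lborel)"
proof -
  interpret A: prob_space "uniform_product m" by (rule prob_space_uniform_product)
  interpret B: prob_space "uniform_measure lborel {0..1::real}"
    by (rule prob_space_uniform_measure) auto
  interpret P: pair_sigma_finite "uniform_product m" lborel ..
  have "(\<integral>\<^sup>+w. f w \<partial>uniform_product (Suc m))
      = (\<integral>\<^sup>+p. f (fst p * snd p) \<partial>(uniform_product m \<Otimes>\<^sub>M uniform_measure lborel {0..1}))"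
    by (simp add: nn_integral_distr case_prod_beta)
  also have "\<dots> = (\<integral>\<^sup>+v. \<integral>\<^sup>+u. f (v * u) \<partial>uniform_measure lborel {0..1} \<partial>uniform_product m)"
    by (subst B.nn_integral_fst[symmetric]) auto
  also have "\<dots> = (\<integral>\<^sup>+v. \<integral>\<^sup>+u. indicator {0..1} u * f (v * u) \<partial>lborel \<partial>uniform_product m)"
    by (simp add: nn_integral_uniform_measure divide_ennreal_def mult.commute)
  also have "\<dots> = (\<integral>\<^sup>+u. \<integral>\<^sup>+v. indicator {0..1} u * f (v * u) \<partial>uniform_product m \<partial>lborel)"
    by (rule P.Fubini'[symmetric]) measurable
  also have "\<dots> = (\<integral>\<^sup>+u. indicator {0..1} u * (\<integral>\<^sup>+v. f (v * u) \<partial>uniform_product m) \<partial>lborel)"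
    by (subst nn_integral_cmult) auto
  finally show ?thesis .
qed

lemma emeasure_uniform_product_Suc_atMost:
  "emeasure (uniform_product (Suc m)) {..\<tau>}
     = (\<integral>\<^sup>+u. indicator {0..1} u * emeasure (uniform_product m) {..\<tau> / u} \<partial>lborel)"
proof -
  have "emeasure (uniform_product (Suc m)) {..\<tau>}
      = (\<integral>\<^sup>+u. indicator {0..1} u * (\<integral>\<^sup>+v. indicator {..\<tau>} (v * u) \<partial>uniform_product m) \<partial>lborel)"
    using nn_integral_uniform_product_Suc[of "indicator {..\<tau>}" m] by simp
  also have "\<dots> = (\<integral>\<^sup>+u. indicator {0..1} u * emeasure (uniform_product m) {..\<tau> / u} \<partial>lborel)"
  proof (rule nn_integral_cong_AE)
    show "AE u in lborel. indicator {0..1} u * (\<integral>\<^sup>+v. indicator {..\<tau>} (v * u) \<partial>uniform_product m)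
        = indicator {0..1} u * emeasure (uniform_product m) {..\<tau> / u}"
      using AE_lborel_singleton[of 0]
    proof eventually_elim
      case (elim u)
      show ?case
      proof (cases "u \<in> {0..1}")
        case True
        with elim have "0 < u" by auto
        then have "(\<integral>\<^sup>+v. indicator {..\<tau>} (v * u) \<partial>uniform_product m)
            = (\<integral>\<^sup>+v. indicator {..\<tau> / u} v \<partial>uniform_product m)"
          by (intro nn_integral_cong) (auto simp: indicator_def pos_le_divide_eq)
        then show ?thesis by simp
      qed simp
    qed
  qed
  finally show ?thesis .
qed

lemma nn_integral_powr_unit_interval:
  assumes "-1 < a"
  shows "(\<integral>\<^sup>+u. indicator {0..1} u * ennreal (u powr a) \<partial>lborel) = ennreal (1 / (a + 1))"
proof -
  have "((\<lambda>x. x powr a) has_integral (1 powr (a + 1) / (a + 1))) {0..1}"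
    by (rule has_integral_powr_from_0) (use assms in auto)
  then have "integral\<^sup>N lborel (\<lambda>x. indicator {0..1} x * (x powr a)) = 1 / (a + 1)"
    by (subst nn_integral_has_integral_lebesgue) auto
  moreover have "(\<integral>\<^sup>+u. indicator {0..1} u * ennreal (u powr a) \<partial>lborel)
      = integral\<^sup>N lborel (\<lambda>x. indicator {0..1} x * (x powr a))"
    by (rule nn_integral_cong) (auto simp: indicator_def)
  ultimately show ?thesis by simp
qed

text \<open>Markov's inequality for V^(-s), since a uniform variable U has E U^(-s) = 1/(1-s).\<close>

lemma emeasure_uniform_product_atMost_le:
  assumes s: "0 < s" "s < 1" and "0 < \<tau>"
  shows "emeasure (uniform_product m) {..\<tau>} \<le> ennreal (\<tau> powr s / (1 - s) ^ m)"
  using \<open>0 < \<tau>\<close>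
proof (induction m arbitrary: \<tau>)
  case 0
  show ?case
  proof (cases "1 \<le> \<tau>")
    case True
    then have "1 \<le> \<tau> powr s" using s by (simp add: ge_one_powr_ge_zero)
    then show ?thesis using True by (simp add: emeasure_return)
  qed (simp add: emeasure_return indicator_def)
next
  case (Suc m)
  have "emeasure (uniform_product (Suc m)) {..\<tau>}
      = (\<integral>\<^sup>+u. indicator {0..1} u * emeasure (uniform_product m) {..\<tau> / u} \<partial>lborel)"
    by (rule emeasure_uniform_product_Suc_atMost)
  also have "\<dots> \<le> (\<integral>\<^sup>+u. indicator {0..1} u * ennreal (u powr (-s)) * ennreal (\<tau> powr s / (1 - s) ^ m) \<partial>lborel)"
  proof (rule nn_integral_mono_AE)
    show "AE u in lborel. indicator {0..1} u * emeasure (uniform_product m) {..\<tau> / u}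
        \<le> indicator {0..1} u * ennreal (u powr (-s)) * ennreal (\<tau> powr s / (1 - s) ^ m)"
      using AE_lborel_singleton[of 0]
    proof eventually_elim
      case (elim u)
      show ?case
      proof (cases "u \<in> {0..1}")
        case True
        with elim have u: "0 < u" by auto
        have "emeasure (uniform_product m) {..\<tau> / u} \<le> ennreal ((\<tau> / u) powr s / (1 - s) ^ m)"
          using Suc.IH[of "\<tau> / u"] Suc.prems u by simp
        also have "(\<tau> / u) powr s / (1 - s) ^ m = u powr (-s) * (\<tau> powr s / (1 - s) ^ m)"
          using u Suc.prems by (simp add: powr_divide powr_minus divide_simps)
        also have "ennreal \<dots> = ennreal (u powr (-s)) * ennreal (\<tau> powr s / (1 - s) ^ m)"
          using s by (intro ennreal_mult) auto
        finally show ?thesis using True by (simp add: mult.assoc)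
      qed simp
    qed
  qed
  also have "\<dots> = (\<integral>\<^sup>+u. indicator {0..1} u * ennreal (u powr (-s)) \<partial>lborel) * ennreal (\<tau> powr s / (1 - s) ^ m)"
    by (rule nn_integral_multc) measurable
  also have "\<dots> = ennreal (1 / (1 - s)) * ennreal (\<tau> powr s / (1 - s) ^ m)"
    using s by (simp add: nn_integral_powr_unit_interval)
  also have "\<dots> = ennreal (\<tau> powr s / (1 - s) ^ Suc m)"
    using s by (simp add: ennreal_mult'[symmetric] field_simps)
  finally show ?case .
qed

lemma emeasure_uniform_product_atMost_ge:
  assumes "0 < \<tau>" "\<tau> \<le> 1"
  shows "ennreal (\<tau> * (- ln \<tau>) ^ m / fact m) \<le> emeasure (uniform_product (Suc m)) {..\<tau>}"
  using assms
proof (induction m arbitrary: \<tau>)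
  case 0
  have "ennreal (\<tau> * (- ln \<tau>) ^ 0 / fact 0) = (\<integral>\<^sup>+u. indicator {0<..\<tau>} u \<partial>lborel)"
    using 0 by simp
  also have "\<dots> \<le> (\<integral>\<^sup>+u. indicator {0..1} u * emeasure (uniform_product 0) {..\<tau> / u} \<partial>lborel)"
    using 0 by (intro nn_integral_mono) (auto simp: indicator_def emeasure_return field_simps)
  also have "\<dots> = emeasure (uniform_product (Suc 0)) {..\<tau>}"
    by (rule emeasure_uniform_product_Suc_atMost[symmetric])
  finally show ?case .
next
  case (Suc m)
  define F where "F u = \<tau> * (ln (u / \<tau>)) ^ Suc m / fact (Suc m)" for u
  define f where "f u = \<tau> / u * (ln (u / \<tau>)) ^ m / fact m" for u
  have "ennreal (\<tau> * (- ln \<tau>) ^ Suc m / fact (Suc m)) = ennreal (F 1 - F \<tau>)"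
    by (simp add: F_def ln_div Suc.prems)
  also have "\<dots> = (\<integral>\<^sup>+u. ennreal (f u) * indicator {\<tau>..1} u \<partial>lborel)"
  proof (rule nn_integral_FTC_Icc[symmetric])
    show "f \<in> borel_measurable borel" unfolding f_def by measurable
    show "\<tau> \<le> 1" by fact
    fix x assume x: "x \<in> {\<tau>..1}"
    then have "0 < x" using Suc.prems by auto
    then show "0 \<le> f x" using x Suc.prems by (auto simp: f_def)
    show "(F has_real_derivative f x) (at x)"
      unfolding F_def f_def
      by (rule derivative_eq_intros refl | use \<open>0 < x\<close> Suc.prems in simp)+
  qed
  also have "\<dots> \<le> (\<integral>\<^sup>+u. indicator {0..1} u * emeasure (uniform_product (Suc m)) {..\<tau> / u} \<partial>lborel)"
  proof (rule nn_integral_mono)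
    fix u
    show "ennreal (f u) * indicator {\<tau>..1} u
        \<le> indicator {0..1} u * emeasure (uniform_product (Suc m)) {..\<tau> / u}"
    proof (cases "u \<in> {\<tau>..1}")
      case True
      then have u: "0 < u" "\<tau> \<le> u" "u \<le> 1" using Suc.prems by auto
      have "ennreal (f u) = ennreal (\<tau> / u * (- ln (\<tau> / u)) ^ m / fact m)"
        using u Suc.prems by (simp add: f_def ln_div)
      also have "\<dots> \<le> emeasure (uniform_product (Suc m)) {..\<tau> / u}"
        using u Suc.prems by (intro Suc.IH) (auto simp: divide_le_eq_1)
      finally show ?thesis using True u by simp
    qed simp
  qed
  also have "\<dots> = emeasure (uniform_product (Suc (Suc m))) {..\<tau>}"
    by (rule emeasure_uniform_product_Suc_atMost[symmetric])
  finally show ?case .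
qed

section \<open>Gamma and exponential densities\<close>

lemma nn_integral_power_substitution:
  fixes k :: "real \<Rightarrow> ennreal"
  assumes "0 < G" and [measurable]: "k \<in> borel_measurable borel"
  shows "(\<integral>\<^sup>+g. ennreal (real (Suc m) * g ^ m / G ^ Suc m) * k ((g / G) ^ Suc m) * indicator {0..G} g \<partial>lborel)
       = (\<integral>\<^sup>+u. indicator {0..1} u * k u \<partial>lborel)"
proof -
  define \<phi> where "\<phi> x = x ^ Suc m / G ^ Suc m" for x
  define \<phi>' where "\<phi>' x = real (Suc m) * x ^ m / G ^ Suc m" for x
  have "(\<integral>\<^sup>+g. k (\<phi> g) * ennreal (\<phi>' g) * indicator {0..G} g \<partial>lborel)
      = (\<integral>\<^sup>+u. k u * indicator {\<phi> 0..\<phi> G} u \<partial>lborel)"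
  proof (rule nn_integral_substitution_aux[symmetric])
    fix x assume x: "x \<in> {0..G}"
    show "(\<phi> has_real_derivative \<phi>' x) (at x)"
      unfolding \<phi>_def \<phi>'_def using DERIV_cdivide[OF DERIV_pow[of "Suc m" x], of "G ^ Suc m"] by simp
    show "0 \<le> \<phi>' x" using x by (simp add: \<phi>'_def)
  next
    show "continuous_on {0..G} \<phi>'"
      unfolding \<phi>'_def by (intro continuous_intros) (use \<open>0 < G\<close> in auto)
  qed (use \<open>0 < G\<close> in auto)
  then show ?thesis
    using \<open>0 < G\<close> by (simp add: \<phi>_def \<phi>'_def power_divide mult_ac)
qed

text \<open>If G is Gamma(m+1) distributed and E is exponential, then conditionally on G + E the
  variable (G / (G + E))^(m+1) is uniform on [0,1].\<close>

lemma nn_integral_erlang_exponential_fixed_sum: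
  fixes k :: "real \<Rightarrow> ennreal"
  assumes l: "0 < l" and k [measurable]: "k \<in> borel_measurable borel"
  shows "(\<integral>\<^sup>+g. ennreal (erlang_density m l g) * ennreal (exponential_density l (G - g))
              * k ((g / G) ^ Suc m) \<partial>lborel)
       = ennreal (erlang_density (Suc m) l G) * (\<integral>\<^sup>+u. indicator {0..1} u * k u \<partial>lborel)"
proof (cases "0 < G")
  case False
  have "AE g in lborel. ennreal (erlang_density m l g) * ennreal (exponential_density l (G - g))
      * k ((g / G) ^ Suc m) = 0"
    using AE_lborel_singleton[of 0]
  proof eventually_elim
    case (elim g)
    then show ?case using False by (cases "g < 0") (auto simp: erlang_density_def)
  qed
  then have "(\<integral>\<^sup>+g. ennreal (erlang_density m l g) * ennreal (exponential_density l (G - g))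
      * k ((g / G) ^ Suc m) \<partial>lborel) = (\<integral>\<^sup>+g. 0 \<partial>(lborel::real measure))"
    by (rule nn_integral_cong_AE)
  moreover have "erlang_density (Suc m) l G = 0"
    using False by (auto simp: erlang_density_def)
  ultimately show ?thesis by simp
next
  case True
  have density: "erlang_density m l g * exponential_density l (G - g)
      = erlang_density (Suc m) l G * (real (Suc m) * g ^ m / G ^ Suc m)" if "g \<in> {0..G}" for g
  proof -
    have "erlang_density m l g * exponential_density l (G - g)
        = l ^ Suc (Suc m) * g ^ m * (exp (- l * g) * exp (- (G - g) * l)) / fact m"
      using that by (simp add: erlang_density_def exponential_density_def field_simps)
    also have "exp (- l * g) * exp (- (G - g) * l) = exp (- l * G)"
      by (simp add: exp_add[symmetric] algebra_simps)
    also have "l ^ Suc (Suc m) * g ^ m * exp (- l * G) / fact m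
        = erlang_density (Suc m) l G * (real (Suc m) * g ^ m / G ^ Suc m)"
      using True by (simp add: erlang_density_def field_simps del: of_nat_Suc power_Suc)
    finally show ?thesis .
  qed
  have "(\<integral>\<^sup>+g. ennreal (erlang_density m l g) * ennreal (exponential_density l (G - g))
          * k ((g / G) ^ Suc m) \<partial>lborel)
      = (\<integral>\<^sup>+g. ennreal (erlang_density (Suc m) l G) * (ennreal (real (Suc m) * g ^ m / G ^ Suc m)
          * k ((g / G) ^ Suc m) * indicator {0..G} g) \<partial>lborel)"
  proof (rule nn_integral_cong)
    fix g :: real
    show "ennreal (erlang_density m l g) * ennreal (exponential_density l (G - g)) * k ((g / G) ^ Suc m)
        = ennreal (erlang_density (Suc m) l G) * (ennreal (real (Suc m) * g ^ m / G ^ Suc m)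
          * k ((g / G) ^ Suc m) * indicator {0..G} g)"
    proof (cases "g \<in> {0..G}")
      case True
      have "ennreal (erlang_density m l g) * ennreal (exponential_density l (G - g))
          = ennreal (erlang_density m l g * exponential_density l (G - g))"
        using l by (simp add: ennreal_mult exponential_density_nonneg)
      also have "\<dots> = ennreal (erlang_density (Suc m) l G) * ennreal (real (Suc m) * g ^ m / G ^ Suc m)"
        by (subst density[OF True], rule ennreal_mult) (use l True in auto)
      finally show ?thesis using True by (simp add: mult.assoc)
    qed (auto simp: erlang_density_def exponential_density_def)
  qed
  also have "\<dots> = ennreal (erlang_density (Suc m) l G) * (\<integral>\<^sup>+u. indicator {0..1} u * k u \<partial>lborel)"
    by (subst nn_integral_cmult) (measurable, simp only: nn_integral_power_substitution[OF True k])
  finally show ?thesis .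
qed

lemma nn_integral_erlang_exponential:
  fixes k :: "real \<Rightarrow> real \<Rightarrow> ennreal"
  assumes l: "0 < l" and k [measurable]: "(\<lambda>(G, u). k G u) \<in> borel_measurable (borel \<Otimes>\<^sub>M borel)"
  shows "(\<integral>\<^sup>+g. ennreal (erlang_density m l g) *
            (\<integral>\<^sup>+e. ennreal (exponential_density l e) * k (g + e) ((g / (g + e)) ^ Suc m) \<partial>lborel) \<partial>lborel)
       = (\<integral>\<^sup>+G. ennreal (erlang_density (Suc m) l G) * (\<integral>\<^sup>+u. indicator {0..1} u * k G u \<partial>lborel) \<partial>lborel)"
proof -
  have shift: "(\<integral>\<^sup>+e. ennreal (exponential_density l e) * k (g + e) ((g / (g + e)) ^ Suc m) \<partial>lborel)
      = (\<integral>\<^sup>+G. ennreal (exponential_density l (G - g)) * k G ((g / G) ^ Suc m) \<partial>lborel)" for g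
    using nn_integral_real_affine[of "\<lambda>G. ennreal (exponential_density l (G - g)) * k G ((g / G) ^ Suc m)" 1 g]
    by simp
  have "(\<integral>\<^sup>+g. ennreal (erlang_density m l g) *
          (\<integral>\<^sup>+e. ennreal (exponential_density l e) * k (g + e) ((g / (g + e)) ^ Suc m) \<partial>lborel) \<partial>lborel)
      = (\<integral>\<^sup>+g. \<integral>\<^sup>+G. ennreal (erlang_density m l g) * ennreal (exponential_density l (G - g))
          * k G ((g / G) ^ Suc m) \<partial>lborel \<partial>lborel)"
    unfolding shift by (intro nn_integral_cong, subst nn_integral_cmult[symmetric]) (simp_all add: mult.assoc)
  also have "\<dots> = (\<integral>\<^sup>+G. \<integral>\<^sup>+g. ennreal (erlang_density m l g) * ennreal (exponential_density l (G - g))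
      * k G ((g / G) ^ Suc m) \<partial>lborel \<partial>lborel)"
    by (rule lborel_pair.Fubini'[symmetric]) measurable
  also have "\<dots> = (\<integral>\<^sup>+G. ennreal (erlang_density (Suc m) l G) * (\<integral>\<^sup>+u. indicator {0..1} u * k G u \<partial>lborel) \<partial>lborel)"
    by (intro nn_integral_cong nn_integral_erlang_exponential_fixed_sum l) measurable
  finally show ?thesis .
qed

lemma nn_integral_erlang_density_unit_interval_ge:
  assumes l: "0 < l"
  shows "ennreal (exp (- l) * l ^ Suc m / fact (Suc m))
    \<le> (\<integral>\<^sup>+g. ennreal (erlang_density m l g) * indicator {0..<1} g \<partial>lborel)"
proof -
  define c where "c = l ^ Suc m * exp (- l) / fact m"
  define F where "F g = c * g ^ Suc m / real (Suc m)" for g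
  have c: "0 \<le> c" using l by (simp add: c_def)
  have "ennreal (exp (- l) * l ^ Suc m / fact (Suc m)) = ennreal (F 1 - F 0)"
    by (simp add: F_def c_def field_simps del: of_nat_Suc)
  also have "\<dots> = (\<integral>\<^sup>+g. ennreal (c * g ^ m) * indicator {0..1} g \<partial>lborel)"
  proof (rule nn_integral_FTC_Icc[symmetric])
    fix x :: real assume x: "x \<in> {0..1}"
    show "(F has_real_derivative c * x ^ m) (at x)"
      unfolding F_def
      by (rule DERIV_cong[OF DERIV_cdivide[OF DERIV_cmult[OF DERIV_pow[of "Suc m" x]]], of c "real (Suc m)"])
         (simp del: of_nat_Suc)
    show "0 \<le> c * x ^ m" using x c by simp
  qed auto
  also have "\<dots> \<le> (\<integral>\<^sup>+g. ennreal (erlang_density m l g) * indicator {0..<1} g \<partial>lborel)"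
  proof (rule nn_integral_mono_AE)
    show "AE g in lborel. ennreal (c * g ^ m) * indicator {0..1} g
        \<le> ennreal (erlang_density m l g) * indicator {0..<1} g"
      using AE_lborel_singleton[of 1]
    proof eventually_elim
      case (elim g)
      show ?case
      proof (cases "g \<in> {0..<1}")
        case True
        then have g: "0 \<le> g" "g < 1" by auto
        have "exp (- l) \<le> exp (- l * g)" using g l by (simp add: mult_left_le_one_le)
        then have "c * g ^ m \<le> erlang_density m l g"
          using g l by (auto simp: c_def erlang_density_def field_simps intro!: divide_right_mono mult_left_mono)
        then show ?thesis using True by (simp add: ennreal_leI)
      qed (use elim in \<open>auto simp: indicator_def\<close>)
    qed
  qed
  finally show ?thesis .
qed

section \<open>Partial sums of exponential variables\<close>

lemma (in prob_space) nn_integral_indep_var_distributed: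
  assumes indep: "indep_var N1 X1 N2 X2" and distr: "distributed M lborel (\<lambda>\<omega>. p (X2 \<omega>)) f"
    and p [measurable]: "p \<in> N2 \<rightarrow>\<^sub>M borel"
    and F [measurable]: "case_prod F \<in> borel_measurable (N1 \<Otimes>\<^sub>M borel)"
  shows "(\<integral>\<^sup>+\<omega>. F (X1 \<omega>) (p (X2 \<omega>)) \<partial>M) = (\<integral>\<^sup>+\<omega>. \<integral>\<^sup>+e. f e * F (X1 \<omega>) e \<partial>lborel \<partial>M)"
proof -
  have [measurable]: "X1 \<in> M \<rightarrow>\<^sub>M N1" "X2 \<in> M \<rightarrow>\<^sub>M N2"
    using indep by (auto simp: indep_var_distribution_eq)
  have joint: "distr M N1 X1 \<Otimes>\<^sub>M distr M N2 X2 = distr M (N1 \<Otimes>\<^sub>M N2) (\<lambda>x. (X1 x, X2 x))"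
    using indep by (simp add: indep_var_distribution_eq)
  have [measurable]: "f \<in> borel_measurable borel"
    using distr by (simp add: distributed_def)
  interpret P2: prob_space "distr M N2 X2" by (intro prob_space_distr) auto
  have "(\<integral>\<^sup>+\<omega>. F (X1 \<omega>) (p (X2 \<omega>)) \<partial>M)
      = (\<integral>\<^sup>+q. F (fst q) (p (snd q)) \<partial>distr M (N1 \<Otimes>\<^sub>M N2) (\<lambda>x. (X1 x, X2 x)))"
    by (subst nn_integral_distr) auto
  also have "\<dots> = (\<integral>\<^sup>+q. F (fst q) (p (snd q)) \<partial>(distr M N1 X1 \<Otimes>\<^sub>M distr M N2 X2))"
    by (simp add: joint)
  also have "\<dots> = (\<integral>\<^sup>+y. \<integral>\<^sup>+z. F y (p z) \<partial>distr M N2 X2 \<partial>distr M N1 X1)"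
  proof -
    have "(\<lambda>q. F (fst q) (p (snd q))) \<in> borel_measurable (N1 \<Otimes>\<^sub>M N2)" by measurable
    then have "(\<lambda>q. F (fst q) (p (snd q))) \<in> borel_measurable (distr M N1 X1 \<Otimes>\<^sub>M distr M N2 X2)"
      by (subst measurable_cong_sets[OF sets_pair_measure_cong[OF sets_distr sets_distr] refl])
    then show ?thesis by (subst P2.nn_integral_fst[symmetric]) simp_all
  qed
  also have "\<dots> = (\<integral>\<^sup>+y. \<integral>\<^sup>+\<omega>. F y (p (X2 \<omega>)) \<partial>M \<partial>distr M N1 X1)"
    by (intro nn_integral_cong) (subst nn_integral_distr, auto)
  also have "\<dots> = (\<integral>\<^sup>+y. \<integral>\<^sup>+e. f e * F y e \<partial>lborel \<partial>distr M N1 X1)"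
    by (intro nn_integral_cong) (subst distributed_nn_integral[OF distr], auto)
  also have "\<dots> = (\<integral>\<^sup>+\<omega>. \<integral>\<^sup>+e. f e * F (X1 \<omega>) e \<partial>lborel \<partial>M)"
    by (subst nn_integral_distr) auto
  finally show ?thesis .
qed

lemma nn_integral_uniform_product_exponential_rescale:
  assumes [measurable]: "h \<in> borel_measurable (borel \<Otimes>\<^sub>M borel)"
  shows "(\<integral>\<^sup>+v. \<integral>\<^sup>+e. ennreal (exponential_density l e) * h (g + e, g ^ Suc m * v * (g + e)) \<partial>lborel \<partial>uniform_product m)
       = (\<integral>\<^sup>+e. ennreal (exponential_density l e) *
            (\<integral>\<^sup>+v. h (g + e, (g + e) ^ Suc (Suc m) * (v * (g / (g + e)) ^ Suc m)) \<partial>uniform_product m) \<partial>lborel)"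
proof -
  interpret U: prob_space "uniform_product m" by (rule prob_space_uniform_product)
  interpret P: pair_sigma_finite "uniform_product m" lborel ..
  have rescale: "(g + e) ^ Suc (Suc m) * (v * (g / (g + e)) ^ Suc m) = g ^ Suc m * v * (g + e)"
    if "e \<noteq> - g" for e v :: real
  proof -
    have "(g + e) ^ Suc (Suc m) * (v * (g / (g + e)) ^ Suc m)
        = (g + e) * v * ((g + e) * (g / (g + e))) ^ Suc m"
      by (simp only: power_Suc[of "g + e" "Suc m"] power_mult_distrib mult_ac)
    moreover have "g + e \<noteq> 0" using that by auto
    ultimately show ?thesis by (simp add: mult_ac)
  qed
  have "(\<integral>\<^sup>+v. \<integral>\<^sup>+e. ennreal (exponential_density l e) * h (g + e, g ^ Suc m * v * (g + e)) \<partial>lborel \<partial>uniform_product m)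
      = (\<integral>\<^sup>+e. \<integral>\<^sup>+v. ennreal (exponential_density l e) * h (g + e, g ^ Suc m * v * (g + e)) \<partial>uniform_product m \<partial>lborel)"
    by (rule P.Fubini'[symmetric]) measurable
  also have "\<dots> = (\<integral>\<^sup>+e. ennreal (exponential_density l e) *
      (\<integral>\<^sup>+v. h (g + e, g ^ Suc m * v * (g + e)) \<partial>uniform_product m) \<partial>lborel)"
    by (intro nn_integral_cong nn_integral_cmult) measurable
  also have "\<dots> = (\<integral>\<^sup>+e. ennreal (exponential_density l e) *
      (\<integral>\<^sup>+v. h (g + e, (g + e) ^ Suc (Suc m) * (v * (g / (g + e)) ^ Suc m)) \<partial>uniform_product m) \<partial>lborel)"
    by (rule nn_integral_cong_AE, rule AE_mp[OF AE_lborel_singleton[of "- g"]], rule AE_I2)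
       (simp add: rescale del: power_Suc)
  finally show ?thesis .
qed

locale exponential_sequence = prob_space M for M :: "'a measure" +
  fixes E :: "nat \<Rightarrow> 'a \<Rightarrow> real" and l :: real
  assumes rate_pos: "0 < l"
    and indep: "indep_vars (\<lambda>_. borel) E UNIV"
    and distributed_E: "\<And>k. distributed M lborel (E k) (exponential_density l)"
begin

definition S :: "nat \<Rightarrow> 'a \<Rightarrow> real" where
  "S m \<omega> = (\<Sum>k\<le>m. E k \<omega>)"

definition Sprod :: "nat \<Rightarrow> 'a \<Rightarrow> real" where
  "Sprod m \<omega> = (\<Prod>i\<le>m. S i \<omega>)"

abbreviation X :: "'a \<Rightarrow> real" where
  "X \<equiv> prod_min_partial_sums E"

lemma measurable_E [measurable]: "E k \<in> borel_measurable M"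
  using distributed_E[of k] by (simp add: distributed_def)

lemma measurable_S [measurable]: "S m \<in> borel_measurable M"
  unfolding S_def by measurable

lemma measurable_Sprod [measurable]: "Sprod m \<in> borel_measurable M"
  unfolding Sprod_def by measurable

lemma nn_integral_S_Sprod_Suc:
  assumes [measurable]: "h \<in> borel_measurable (borel \<Otimes>\<^sub>M borel)"
  shows "(\<integral>\<^sup>+\<omega>. h (S (Suc m) \<omega>, Sprod (Suc m) \<omega>) \<partial>M)
    = (\<integral>\<^sup>+\<omega>. \<integral>\<^sup>+e. ennreal (exponential_density l e) * h (S m \<omega> + e, Sprod m \<omega> * (S m \<omega> + e)) \<partial>lborel \<partial>M)"
proof -
  define F where "F x e = h ((\<Sum>k\<le>m. x k) + e, (\<Prod>i\<le>m. \<Sum>k\<le>i. x k) * ((\<Sum>k\<le>m. x k) + e))"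
    for x :: "nat \<Rightarrow> real" and e
  have "indep_var (PiM {..m} (\<lambda>_. borel)) (\<lambda>\<omega>. restrict (\<lambda>i. E i \<omega>) {..m})
                  (PiM {Suc m} (\<lambda>_. borel)) (\<lambda>\<omega>. restrict (\<lambda>i. E i \<omega>) {Suc m})"
    by (rule indep_var_restrict[OF indep]) auto
  then have "(\<integral>\<^sup>+\<omega>. F (restrict (\<lambda>i. E i \<omega>) {..m}) ((\<lambda>x. x (Suc m)) (restrict (\<lambda>i. E i \<omega>) {Suc m})) \<partial>M)
      = (\<integral>\<^sup>+\<omega>. \<integral>\<^sup>+e. ennreal (exponential_density l e) * F (restrict (\<lambda>i. E i \<omega>) {..m}) e \<partial>lborel \<partial>M)"
    by (rule nn_integral_indep_var_distributed) (use distributed_E[of "Suc m"] in \<open>simp_all add: F_def\<close>)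
  moreover have "(\<Sum>k\<le>i. restrict (\<lambda>i. E i \<omega>) {..m} k) = S i \<omega>" if "i \<le> m" for i \<omega>
    unfolding S_def using that by (intro sum.cong) auto
  ultimately show ?thesis
    by (simp add: F_def S_def Sprod_def)
qed

text \<open>The joint law of (S m, Sprod m) is that of (G, G^(m+1) V) with G Gamma(m+1, l) distributed
  and independent of V, a product of m independent uniform variables.\<close>

lemma nn_integral_S_Sprod:
  assumes "h \<in> borel_measurable (borel \<Otimes>\<^sub>M borel)"
  shows "(\<integral>\<^sup>+\<omega>. h (S m \<omega>, Sprod m \<omega>) \<partial>M)
       = (\<integral>\<^sup>+g. ennreal (erlang_density m l g) * (\<integral>\<^sup>+v. h (g, g ^ Suc m * v) \<partial>uniform_product m) \<partial>lborel)"
  using assms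
proof (induction m arbitrary: h)
  case 0
  note [measurable] = "0.prems"
  have "(\<integral>\<^sup>+\<omega>. h (S 0 \<omega>, Sprod 0 \<omega>) \<partial>M) = (\<integral>\<^sup>+\<omega>. (\<lambda>x. h (x, x)) (E 0 \<omega>) \<partial>M)"
    by (simp add: S_def Sprod_def)
  also have "\<dots> = (\<integral>\<^sup>+g. ennreal (exponential_density l g) * h (g, g) \<partial>lborel)"
    by (rule distributed_nn_integral[OF distributed_E[of 0], symmetric]) measurable
  finally show ?case by (simp add: nn_integral_return)
next
  case (Suc m)
  note [measurable] = Suc.prems
  interpret U: prob_space "uniform_product m" by (rule prob_space_uniform_product)
  define k where "k G u = (\<integral>\<^sup>+v. h (G, G ^ Suc (Suc m) * (v * u)) \<partial>uniform_product m)" for G u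
  have [measurable]: "(\<lambda>(G, u). k G u) \<in> borel_measurable (borel \<Otimes>\<^sub>M borel)"
    unfolding k_def by measurable
  have "(\<integral>\<^sup>+\<omega>. h (S (Suc m) \<omega>, Sprod (Suc m) \<omega>) \<partial>M)
      = (\<integral>\<^sup>+\<omega>. (\<lambda>p. \<integral>\<^sup>+e. ennreal (exponential_density l e) * h (fst p + e, snd p * (fst p + e)) \<partial>lborel)
            (S m \<omega>, Sprod m \<omega>) \<partial>M)"
    by (simp add: nn_integral_S_Sprod_Suc)
  also have "\<dots> = (\<integral>\<^sup>+g. ennreal (erlang_density m l g) *
      (\<integral>\<^sup>+v. \<integral>\<^sup>+e. ennreal (exponential_density l e) * h (g + e, g ^ Suc m * v * (g + e)) \<partial>lborel \<partial>uniform_product m) \<partial>lborel)"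
    by (subst Suc.IH) simp_all
  also have "\<dots> = (\<integral>\<^sup>+g. ennreal (erlang_density m l g) *
      (\<integral>\<^sup>+e. ennreal (exponential_density l e) * k (g + e) ((g / (g + e)) ^ Suc m) \<partial>lborel) \<partial>lborel)"
    unfolding k_def by (simp only: nn_integral_uniform_product_exponential_rescale[OF Suc.prems])
  also have "\<dots> = (\<integral>\<^sup>+G. ennreal (erlang_density (Suc m) l G) * (\<integral>\<^sup>+u. indicator {0..1} u * k G u \<partial>lborel) \<partial>lborel)"
    by (rule nn_integral_erlang_exponential[OF rate_pos]) measurable
  also have "\<dots> = (\<integral>\<^sup>+G. ennreal (erlang_density (Suc m) l G) *
      (\<integral>\<^sup>+w. h (G, G ^ Suc (Suc m) * w) \<partial>uniform_product (Suc m)) \<partial>lborel)"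
    by (intro nn_integral_cong, subst nn_integral_uniform_product_Suc) (measurable, simp add: k_def)
  finally show ?case .
qed

definition partial_prod :: "nat \<Rightarrow> 'a \<Rightarrow> real" where
  "partial_prod n \<omega> = (\<Prod>i<n. min (S i \<omega>) 1)"

lemma X_eq_lim_partial_prod: "X \<omega> = lim (\<lambda>n. partial_prod n \<omega>)"
  by (simp add: prod_min_partial_sums_def partial_prod_def S_def)

lemma measurable_X [measurable]: "X \<in> borel_measurable M"
proof -
  have "(\<lambda>\<omega>. lim (\<lambda>n. partial_prod n \<omega>)) \<in> borel_measurable M"
    unfolding partial_prod_def by measurable
  then show ?thesis by (simp add: X_eq_lim_partial_prod[abs_def])
qed

lemma AE_E_nonneg: "AE \<omega> in M. \<forall>k. 0 \<le> E k \<omega>"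
  unfolding AE_all_countable
proof
  fix k
  have density: "distr M lborel (E k) = density lborel (\<lambda>x. ennreal (exponential_density l x))"
    using distributed_E[of k] by (simp add: distributed_def)
  have "AE x in distr M lborel (E k). 0 \<le> x"
    unfolding density by (subst AE_density) (auto simp: exponential_density_def)
  then show "AE \<omega> in M. 0 \<le> E k \<omega>" by (rule AE_distrD[rotated]) measurable
qed

context
  fixes \<omega> assumes E_nonneg: "\<forall>k. 0 \<le> E k \<omega>"
begin

lemma S_mono: "i \<le> j \<Longrightarrow> S i \<omega> \<le> S j \<omega>"
  unfolding S_def by (rule sum_mono2) (use E_nonneg in auto)

lemma S_nonneg: "0 \<le> S i \<omega>"
  unfolding S_def using E_nonneg by (simp add: sum_nonneg)

lemma partial_prod_nonneg: "0 \<le> partial_prod n \<omega>"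
  unfolding partial_prod_def using S_nonneg by (simp add: prod_nonneg)

lemma decseq_partial_prod: "decseq (\<lambda>n. partial_prod n \<omega>)"
proof (rule decseq_SucI)
  fix n
  have "partial_prod (Suc n) \<omega> = partial_prod n \<omega> * min (S n \<omega>) 1"
    by (simp add: partial_prod_def)
  also have "\<dots> \<le> partial_prod n \<omega>"
    using partial_prod_nonneg by (simp add: mult_left_le)
  finally show "partial_prod (Suc n) \<omega> \<le> partial_prod n \<omega>" .
qed

lemma partial_prod_LIMSEQ: "(\<lambda>n. partial_prod n \<omega>) \<longlonglongrightarrow> X \<omega>"
proof -
  obtain L where "(\<lambda>n. partial_prod n \<omega>) \<longlonglongrightarrow> L"
    using decseq_convergent[OF decseq_partial_prod] partial_prod_nonneg by blast
  then show ?thesis by (simp add: X_eq_lim_partial_prod limI)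
qed

lemma partial_prod_Suc_eq_Sprod:
  assumes "S m \<omega> < 1"
  shows "partial_prod (Suc m) \<omega> = Sprod m \<omega>"
  unfolding partial_prod_def Sprod_def lessThan_Suc_atMost
proof (intro prod.cong refl)
  fix i assume "i \<in> {..m}"
  then have "S i \<omega> \<le> S m \<omega>" by (intro S_mono) auto
  with assms show "min (S i \<omega>) 1 = S i \<omega>" by simp
qed

lemma X_le_Sprod: "S m \<omega> < 1 \<Longrightarrow> X \<omega> \<le> Sprod m \<omega>"
  using decseq_ge[OF decseq_partial_prod partial_prod_LIMSEQ, of "Suc m"]
  by (simp add: partial_prod_Suc_eq_Sprod)

lemma partial_prod_cases: "partial_prod n \<omega> = 1 \<or> (\<exists>m. S m \<omega> < 1 \<and> Sprod m \<omega> = partial_prod n \<omega>)"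
proof (induction n)
  case 0
  then show ?case by (simp add: partial_prod_def)
next
  case (Suc n)
  show ?case
  proof (cases "S n \<omega> < 1")
    case True
    then show ?thesis using partial_prod_Suc_eq_Sprod[of n] by auto
  next
    case False
    then have "partial_prod (Suc n) \<omega> = partial_prod n \<omega>" by (simp add: partial_prod_def)
    then show ?thesis using Suc.IH by simp
  qed
qed

lemma X_less_imp_Sprod_less:
  assumes "X \<omega> < \<tau>" "\<tau> \<le> 1"
  shows "\<exists>m. S m \<omega> < 1 \<and> Sprod m \<omega> < \<tau>"
proof -
  have "eventually (\<lambda>n. partial_prod n \<omega> < \<tau>) sequentially"
    using partial_prod_LIMSEQ assms(1) by (rule order_tendstoD)
  then obtain n where "partial_prod n \<omega> < \<tau>" by (auto simp: eventually_sequentially)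
  then show ?thesis using partial_prod_cases[of n] assms(2) by auto
qed

end

section \<open>Upper bound\<close>

lemma erlang_density_times_uniform_product_le:
  assumes s: "0 < s" "s < 1" and \<tau>: "0 < \<tau>" and g: "0 < g"
  shows "ennreal (erlang_density m l g) * emeasure (uniform_product m) {..\<tau> / g ^ Suc m}
    \<le> ennreal (l ^ Suc m / fact m * (\<tau> powr s / (1 - s) ^ m) * g powr (real m - real (Suc m) * s))"
proof -
  define C where "C = l ^ Suc m / fact m * (\<tau> powr s / (1 - s) ^ m)"
  have "(\<tau> / g ^ Suc m) powr s = \<tau> powr s / (g powr real (Suc m)) powr s"
    using g \<tau> by (subst powr_realpow[OF g]) (simp add: powr_divide)
  also have "\<dots> = \<tau> powr s * g powr (- (real (Suc m) * s))"
    by (simp add: powr_powr powr_minus_divide)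
  finally have "(\<tau> / g ^ Suc m) powr s = \<tau> powr s * g powr (- (real (Suc m) * s))" .
  moreover have "g ^ m * g powr (- (real (Suc m) * s)) = g powr (real m - real (Suc m) * s)"
    using g by (simp add: powr_realpow[symmetric] powr_add[symmetric])
  ultimately have "erlang_density m l g * ((\<tau> / g ^ Suc m) powr s / (1 - s) ^ m)
      = C * g powr (real m - real (Suc m) * s) * exp (- l * g)"
    using g unfolding C_def erlang_density_def by (simp add: field_simps)
  also have "\<dots> \<le> C * g powr (real m - real (Suc m) * s)"
    using g s rate_pos by (intro mult_left_le) (auto simp: C_def)
  finally have bound: "erlang_density m l g * ((\<tau> / g ^ Suc m) powr s / (1 - s) ^ m)
      \<le> C * g powr (real m - real (Suc m) * s)" .
  have "ennreal (erlang_density m l g) * emeasure (uniform_product m) {..\<tau> / g ^ Suc m}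
      \<le> ennreal (erlang_density m l g) * ennreal ((\<tau> / g ^ Suc m) powr s / (1 - s) ^ m)"
    by (intro mult_left_mono emeasure_uniform_product_atMost_le) (use s \<tau> g in auto)
  also have "\<dots> = ennreal (erlang_density m l g * ((\<tau> / g ^ Suc m) powr s / (1 - s) ^ m))"
    using rate_pos s by (subst ennreal_mult) auto
  also have "\<dots> \<le> ennreal (C * g powr (real m - real (Suc m) * s))"
    using bound by (rule ennreal_leI)
  finally show ?thesis unfolding C_def .
qed

lemma emeasure_S_less_1_Sprod_less:
  assumes s: "0 < s" "s < 1" and \<tau>: "0 < \<tau>"
  shows "emeasure M {\<omega>\<in>space M. S m \<omega> < 1 \<and> Sprod m \<omega> < \<tau>}
    \<le> ennreal (\<tau> powr s * (l / (1 - s)) ^ Suc m / fact (Suc m))"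
proof -
  define C where "C = l ^ Suc m / fact m * (\<tau> powr s / (1 - s) ^ m)"
  define a where "a = real m - real (Suc m) * s"
  have C: "0 \<le> C" using rate_pos s unfolding C_def by simp
  have a: "a + 1 = real (Suc m) * (1 - s)" by (simp add: a_def algebra_simps)
  moreover have "0 < real (Suc m) * (1 - s)" using s by simp
  ultimately have "-1 < a" by linarith
  have "emeasure M {\<omega>\<in>space M. S m \<omega> < 1 \<and> Sprod m \<omega> < \<tau>}
      = (\<integral>\<^sup>+\<omega>. indicator {\<omega>\<in>space M. S m \<omega> < 1 \<and> Sprod m \<omega> < \<tau>} \<omega> \<partial>M)"
    by (rule nn_integral_indicator[symmetric]) measurable
  also have "\<dots> = (\<integral>\<^sup>+\<omega>. indicator ({..<1} \<times> {..<\<tau>}) (S m \<omega>, Sprod m \<omega>) \<partial>M)"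
    by (rule nn_integral_cong) (auto simp: indicator_def)
  also have "\<dots> = (\<integral>\<^sup>+g. ennreal (erlang_density m l g) *
      (\<integral>\<^sup>+v. indicator ({..<1} \<times> {..<\<tau>}) (g, g ^ Suc m * v) \<partial>uniform_product m) \<partial>lborel)"
    by (rule nn_integral_S_Sprod) measurable
  also have "\<dots> \<le> (\<integral>\<^sup>+g. ennreal C * (indicator {0..1} g * ennreal (g powr a)) \<partial>lborel)"
  proof (rule nn_integral_mono_AE)
    show "AE g in lborel. ennreal (erlang_density m l g) *
        (\<integral>\<^sup>+v. indicator ({..<1} \<times> {..<\<tau>}) (g, g ^ Suc m * v) \<partial>uniform_product m)
      \<le> ennreal C * (indicator {0..1} g * ennreal (g powr a))"
      using AE_lborel_singleton[of 0]
    proof eventually_elim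
      case (elim g)
      consider "g < 0" | "1 \<le> g" | "0 < g" "g < 1" using elim by linarith
      then show ?case
      proof cases
        case 3
        have "(\<integral>\<^sup>+v. indicator ({..<1} \<times> {..<\<tau>}) (g, g ^ Suc m * v) \<partial>uniform_product m)
            \<le> (\<integral>\<^sup>+v. indicator {..\<tau> / g ^ Suc m} v \<partial>uniform_product m)"
          using 3 by (intro nn_integral_mono) (auto simp: indicator_def pos_le_divide_eq mult.commute)
        then have "ennreal (erlang_density m l g) *
            (\<integral>\<^sup>+v. indicator ({..<1} \<times> {..<\<tau>}) (g, g ^ Suc m * v) \<partial>uniform_product m)
          \<le> ennreal (erlang_density m l g) * emeasure (uniform_product m) {..\<tau> / g ^ Suc m}"
          by (simp add: mult_left_mono)
        also have "\<dots> \<le> ennreal (C * g powr a)"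
          unfolding C_def a_def by (rule erlang_density_times_uniform_product_le[OF s \<tau> \<open>0 < g\<close>])
        finally show ?thesis using 3 C by (simp add: ennreal_mult)
      qed (simp_all add: erlang_density_def indicator_def)
    qed
  qed
  also have "\<dots> = ennreal C * ennreal (1 / (a + 1))"
    by (simp add: nn_integral_cmult nn_integral_powr_unit_interval[OF \<open>-1 < a\<close>])
  also have "\<dots> = ennreal (\<tau> powr s * (l / (1 - s)) ^ Suc m / fact (Suc m))"
    using s C unfolding a C_def
    by (simp add: ennreal_mult[symmetric] power_divide field_simps del: of_nat_Suc)
  finally show ?thesis .
qed

lemma prob_X_le_upper:
  assumes t: "0 < t" "2 * t \<le> 1" and s: "0 < s" "s < 1"
  shows "prob {\<omega>\<in>space M. X \<omega> \<le> t} \<le> (2 * t) powr s * exp (l / (1 - s))"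
proof -
  define \<tau> where "\<tau> = 2 * t"
  define x where "x = l / (1 - s)"
  define A where "A m = {\<omega>\<in>space M. S m \<omega> < 1 \<and> Sprod m \<omega> < \<tau>}" for m
  have [measurable]: "A m \<in> sets M" for m unfolding A_def by measurable
  have \<tau>: "0 < \<tau>" "\<tau> \<le> 1" using t by (auto simp: \<tau>_def)
  have "(\<lambda>n. x ^ n / fact n) sums exp x"
    using exp_converges[of x] by (simp add: divide_inverse_commute scaleR_conv_of_real)
  then have "(\<lambda>m. x ^ Suc m / fact (Suc m)) sums (exp x - 1)"
    by (subst sums_Suc_iff) simp
  then have series: "(\<lambda>m. \<tau> powr s * (x ^ Suc m / fact (Suc m))) sums (\<tau> powr s * (exp x - 1))"
    by (rule sums_mult)
  have "emeasure M {\<omega>\<in>space M. X \<omega> \<le> t} \<le> emeasure M (\<Union>m. A m)"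
  proof (rule emeasure_mono_AE)
    show "AE \<omega> in M. \<omega> \<in> {\<omega> \<in> space M. X \<omega> \<le> t} \<longrightarrow> \<omega> \<in> (\<Union>m. A m)"
      using AE_E_nonneg
    proof eventually_elim
      case (elim \<omega>)
      show ?case
        using X_less_imp_Sprod_less[OF elim _ \<tau>(2)] t by (auto simp: A_def \<tau>_def)
    qed
  qed measurable
  also have "\<dots> \<le> (\<Sum>m. emeasure M (A m))"
    by (rule emeasure_subadditive_countably) auto
  also have "\<dots> \<le> (\<Sum>m. ennreal (\<tau> powr s * (x ^ Suc m / fact (Suc m))))"
    by (intro suminf_le summableI)
      (use emeasure_S_less_1_Sprod_less[OF s \<tau>(1)] in \<open>simp add: A_def x_def\<close>)
  also have "\<dots> = ennreal (\<tau> powr s * (exp x - 1))"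
    using series rate_pos s by (subst suminf_ennreal2) (auto simp: sums_iff x_def)
  finally have "emeasure M {\<omega>\<in>space M. X \<omega> \<le> t} \<le> ennreal (\<tau> powr s * (exp x - 1))" .
  moreover have "0 \<le> \<tau> powr s * (exp x - 1)"
    using rate_pos s by (intro mult_nonneg_nonneg) (auto simp: x_def)
  ultimately have "prob {\<omega>\<in>space M. X \<omega> \<le> t} \<le> \<tau> powr s * (exp x - 1)"
    by (simp add: emeasure_eq_measure)
  also have "\<dots> \<le> \<tau> powr s * exp x" by (intro mult_left_mono) auto
  finally show ?thesis by (simp add: \<tau>_def x_def)
qed

text \<open>The optimal exponent s = 1 - sqrt(l/L).\<close>

lemma prob_X_le_exp_upper:
  assumes "l < L" "1 \<le> L"
  shows "prob {\<omega>\<in>space M. X \<omega> \<le> exp (- L)} \<le> 2 * exp l * exp (- (sqrt L - sqrt l)\<^sup>2)"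
proof -
  define a b where "a = sqrt l" and "b = sqrt L"
  have ab: "0 < a" "a < b" "a\<^sup>2 = l" "b\<^sup>2 = L"
    using rate_pos assms by (auto simp: a_def b_def)
  define s where "s = 1 - a / b"
  have s: "0 < s" "s < 1" using ab by (auto simp: s_def field_simps)
  have "2 * exp (- L) \<le> 2 * exp (- 1)" using assms by simp
  also have "\<dots> \<le> 1" using exp_ge_add_one_self[of 1] by (simp add: exp_minus field_simps)
  finally have "prob {\<omega>\<in>space M. X \<omega> \<le> exp (- L)} \<le> (2 * exp (- L)) powr s * exp (l / (1 - s))"
    using s by (intro prob_X_le_upper) auto
  also have "\<dots> = 2 powr s * exp (2 * a * b - L)"
  proof -
    have "- L * s + l / (1 - s) = 2 * a * b - L"
      using ab by (simp add: s_def field_simps power2_eq_square flip: ab(3,4))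
    then show ?thesis by (simp add: powr_mult exp_powr_real mult.assoc flip: exp_add)
  qed
  also have "\<dots> \<le> 2 * exp (2 * a * b - L)"
    using powr_mono[of s 1 2] s by simp
  also have "2 * exp (2 * a * b - L) = 2 * exp l * exp (- (sqrt L - sqrt l)\<^sup>2)"
  proof -
    have "2 * a * b - L = l + - (b - a)\<^sup>2"
      using ab by (simp add: power2_eq_square algebra_simps flip: ab(3,4))
    then show ?thesis by (simp add: a_def b_def flip: exp_add)
  qed
  finally show ?thesis .
qed

section \<open>Lower bound\<close>

lemma emeasure_S_less_1_Sprod_le_ge:
  assumes t: "0 < t" "t \<le> 1"
  shows "ennreal (exp (- l) * l ^ Suc (Suc m) / fact (Suc (Suc m)) * (t * (- ln t) ^ m / fact m))
    \<le> emeasure M {\<omega>\<in>space M. S (Suc m) \<omega> < 1 \<and> Sprod (Suc m) \<omega> \<le> t}"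
proof -
  have "ennreal (exp (- l) * l ^ Suc (Suc m) / fact (Suc (Suc m)) * (t * (- ln t) ^ m / fact m))
      = ennreal (exp (- l) * l ^ Suc (Suc m) / fact (Suc (Suc m))) * ennreal (t * (- ln t) ^ m / fact m)"
    using rate_pos t by (intro ennreal_mult) auto
  also have "\<dots> \<le> (\<integral>\<^sup>+g. ennreal (erlang_density (Suc m) l g) * indicator {0..<1} g \<partial>lborel)
        * emeasure (uniform_product (Suc m)) {..t}"
    by (rule mult_mono[OF nn_integral_erlang_density_unit_interval_ge[OF rate_pos]
          emeasure_uniform_product_atMost_ge[OF t]]) simp_all
  also have "\<dots> = (\<integral>\<^sup>+g. ennreal (erlang_density (Suc m) l g) * indicator {0..<1} g
      * emeasure (uniform_product (Suc m)) {..t} \<partial>lborel)"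
    by (rule nn_integral_multc[symmetric]) measurable
  also have "\<dots> \<le> (\<integral>\<^sup>+g. ennreal (erlang_density (Suc m) l g) *
      (\<integral>\<^sup>+v. indicator ({..<1} \<times> {..t}) (g, g ^ Suc (Suc m) * v) \<partial>uniform_product (Suc m)) \<partial>lborel)"
  proof (rule nn_integral_mono)
    fix g :: real
    show "ennreal (erlang_density (Suc m) l g) * indicator {0..<1} g * emeasure (uniform_product (Suc m)) {..t}
      \<le> ennreal (erlang_density (Suc m) l g) *
        (\<integral>\<^sup>+v. indicator ({..<1} \<times> {..t}) (g, g ^ Suc (Suc m) * v) \<partial>uniform_product (Suc m))"
    proof (cases "g \<in> {0..<1}")
      case True
      have "0 \<le> g ^ Suc (Suc m)" "g ^ Suc (Suc m) \<le> 1"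
        using True by (auto intro!: power_le_one simp del: power_Suc)
      then have "g ^ Suc (Suc m) * v \<le> t" if "v \<le> t" for v
        using that t mult_left_le_one_le[of v "g ^ Suc (Suc m)"] mult_nonneg_nonpos[of "g ^ Suc (Suc m)" v]
        by (cases "0 \<le> v") auto
      then have "(\<integral>\<^sup>+v. indicator {..t} v \<partial>uniform_product (Suc m))
          \<le> (\<integral>\<^sup>+v. indicator ({..<1} \<times> {..t}) (g, g ^ Suc (Suc m) * v) \<partial>uniform_product (Suc m))"
        using True by (intro nn_integral_mono) (auto simp: indicator_def)
      then show ?thesis using True by (simp add: mult_left_mono)
    qed simp
  qed
  also have "\<dots> = (\<integral>\<^sup>+\<omega>. indicator ({..<1} \<times> {..t}) (S (Suc m) \<omega>, Sprod (Suc m) \<omega>) \<partial>M)"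
    by (rule nn_integral_S_Sprod[symmetric]) measurable
  also have "\<dots> = (\<integral>\<^sup>+\<omega>. indicator {\<omega>\<in>space M. S (Suc m) \<omega> < 1 \<and> Sprod (Suc m) \<omega> \<le> t} \<omega> \<partial>M)"
    by (rule nn_integral_cong) (auto simp: indicator_def)
  also have "\<dots> = emeasure M {\<omega>\<in>space M. S (Suc m) \<omega> < 1 \<and> Sprod (Suc m) \<omega> \<le> t}"
    by (rule nn_integral_indicator) measurable
  finally show ?thesis .
qed

lemma prob_X_le_lower:
  assumes t: "0 < t" "t \<le> 1"
  shows "exp (- l) * l ^ Suc (Suc m) / fact (Suc (Suc m)) * (t * (- ln t) ^ m / fact m)
    \<le> prob {\<omega>\<in>space M. X \<omega> \<le> t}"
proof -
  have "emeasure M {\<omega>\<in>space M. S (Suc m) \<omega> < 1 \<and> Sprod (Suc m) \<omega> \<le> t} \<le> emeasure M {\<omega>\<in>space M. X \<omega> \<le> t}"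
  proof (rule emeasure_mono_AE)
    show "AE \<omega> in M. \<omega> \<in> {\<omega>\<in>space M. S (Suc m) \<omega> < 1 \<and> Sprod (Suc m) \<omega> \<le> t} \<longrightarrow> \<omega> \<in> {\<omega>\<in>space M. X \<omega> \<le> t}"
      using AE_E_nonneg by eventually_elim (auto dest: X_le_Sprod)
  qed measurable
  with emeasure_S_less_1_Sprod_le_ge[OF t, of m] show ?thesis
    using rate_pos t by (simp add: emeasure_eq_measure)
qed

end

lemma ln_fact_le:
  assumes "1 \<le> n"
  shows "ln (fact n) \<le> real n * ln (real n) - real n + ln (real n) + 1"
  using assms
proof (induction n rule: dec_induct)
  case base
  then show ?case by simp
next
  case (step n)
  have n: "1 \<le> real n" using step.hyps by simp
  have "ln (real n / (real n + 1)) \<le> real n / (real n + 1) - 1"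
    using n by (intro ln_le_minus_one) auto
  then have "1 \<le> (real n + 1) * (ln (real n + 1) - ln (real n))"
    using n by (simp add: ln_div field_simps)
  moreover have "ln (fact (Suc n)) = ln (real n + 1) + ln (fact n)"
    by (simp add: ln_mult add.commute)
  ultimately show ?case using step.IH by (simp add: algebra_simps)
qed

lemma ln_fact_le_near:
  assumes q: "1 \<le> q" "q \<le> real N" "real N \<le> q + 1"
  shows "ln (fact N) \<le> real N * ln q - q + ln (real N) + 3"
proof -
  have N: "1 \<le> real N" using q by linarith
  have "real N * ln (real N / q) \<le> real N * (real N / q - 1)"
    using N q by (intro mult_left_mono ln_le_minus_one) auto
  also have "\<dots> = real N * (real N - q) / q" using q by (simp add: field_simps)
  also have "\<dots> \<le> (q + 1) * 1 / q" using q N by (intro divide_right_mono mult_mono) auto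
  also have "\<dots> \<le> 2" using q by (simp add: field_simps)
  finally have "real N * ln (real N) - real N * ln q \<le> 2"
    using N q by (simp add: ln_div right_diff_distrib)
  moreover have "ln (fact N) \<le> real N * ln (real N) - real N + ln (real N) + 1"
    using N by (intro ln_fact_le) simp
  ultimately show ?thesis using q by linarith
qed

context exponential_sequence
begin

text \<open>The lower bound for m + 2 = \<lceil>sqrt(l L)\<rceil>, which maximises l^(m+2)/(m+2)! \<cdot> L^m/m! up to
  a bounded shift.\<close>

lemma prob_X_le_exp_lower:
  assumes L: "2 \<le> L" "4 * l \<le> L" "4 \<le> l * L"
  shows "exp (- (sqrt L - sqrt l)\<^sup>2 - 4 * ln L - 6) \<le> prob {\<omega>\<in>space M. X \<omega> \<le> exp (- L)}"
proof -
  define q where "q = sqrt (l * L)"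
  define N where "N = nat \<lceil>q\<rceil>"
  define m where "m = N - 2"
  have "2 \<le> q" unfolding q_def using L by (simp add: real_le_rsqrt)
  have N: "q \<le> real N" "real N \<le> q + 1"
    using \<open>2 \<le> q\<close> by (simp_all add: N_def of_nat_nat ceiling_correct le_of_int_ceiling)
  then have Nm: "N = Suc (Suc m)" and "1 \<le> real N"
    using \<open>2 \<le> q\<close> unfolding m_def by linarith+
  have "q \<le> L / 2"
    unfolding q_def using L rate_pos by (intro real_le_lsqrt) (auto simp: power2_eq_square)
  then have "ln (real N) \<le> ln L" using N \<open>1 \<le> real N\<close> L by simp
  have lnq: "ln l + ln L = 2 * ln q"
    using rate_pos L unfolding q_def by (simp add: ln_sqrt ln_mult)
  have square: "(sqrt L - sqrt l)\<^sup>2 = L - 2 * q + l"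
    using rate_pos L unfolding q_def by (simp add: power2_eq_square real_sqrt_mult algebra_simps)
  define LB where "LB = exp (- l) * l ^ N / fact N * (exp (- L) * L ^ m / fact m)"
  have "0 < LB" using rate_pos L by (simp add: LB_def)
  have "(fact m :: real) \<le> fact N" by (rule fact_mono) (simp add: Nm)
  then have "ln (fact m :: real) \<le> ln (fact N)" by simp
  have "real N * ln l + real m * ln L = real N * (ln l + ln L) - 2 * ln L"
    by (simp add: Nm algebra_simps)
  also have "\<dots> = 2 * (real N * ln q) - 2 * ln L" by (simp add: lnq)
  finally have "- (sqrt L - sqrt l)\<^sup>2 - 4 * ln L - 6
      \<le> - l - L + real N * ln l + real m * ln L - ln (fact N) - ln (fact m)"
    using ln_fact_le_near[of q N] N \<open>2 \<le> q\<close> \<open>ln (real N) \<le> ln L\<close> \<open>ln (fact m) \<le> ln (fact N)\<close> square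
    by linarith
  also have "\<dots> = ln LB"
    using rate_pos L by (simp add: LB_def ln_mult ln_div ln_realpow)
  finally have "exp (- (sqrt L - sqrt l)\<^sup>2 - 4 * ln L - 6) \<le> LB"
    using \<open>0 < LB\<close> by (simp add: ln_ge_iff)
  also have "LB \<le> prob {\<omega>\<in>space M. X \<omega> \<le> exp (- L)}"
    using prob_X_le_lower[of "exp (- L)" m] L by (simp add: LB_def Nm)
  finally show ?thesis .
qed

lemma abs_ln_prob_X_le_exp_le:
  assumes L: "3 \<le> L" "4 * l \<le> L" "4 \<le> l * L"
  defines "P \<equiv> prob {\<omega>\<in>space M. X \<omega> \<le> exp (- L)}"
  shows "\<bar>ln P + (sqrt L - sqrt l)\<^sup>2\<bar> \<le> (10 + l) * ln L"
proof -
  have lower: "exp (- (sqrt L - sqrt l)\<^sup>2 - 4 * ln L - 6) \<le> P"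
    unfolding P_def using L by (intro prob_X_le_exp_lower) auto
  then have "0 < P" by (rule less_le_trans[OF exp_gt_zero])
  with lower have "- (sqrt L - sqrt l)\<^sup>2 - 4 * ln L - 6 \<le> ln P"
    by (simp add: ln_ge_iff)
  moreover have "P \<le> 2 * exp l * exp (- (sqrt L - sqrt l)\<^sup>2)"
    unfolding P_def using L rate_pos by (intro prob_X_le_exp_upper) auto
  then have "ln P \<le> ln (2 * exp l * exp (- (sqrt L - sqrt l)\<^sup>2))"
    using \<open>0 < P\<close> by simp
  then have "ln P \<le> ln 2 + l - (sqrt L - sqrt l)\<^sup>2"
    by (simp add: ln_mult)
  moreover have "exp 1 \<le> L" using exp_le L by linarith
  then have "1 \<le> ln L" using L by (simp add: ln_ge_iff)
  moreover from this have "l \<le> l * ln L" using rate_pos by simp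
  ultimately show ?thesis
    using ln_2_less_1 rate_pos unfolding distrib_right by (intro abs_leI) linarith+
qed

end

theorem theorem3:
  fixes M :: "'a measure" and E :: "nat \<Rightarrow> 'a \<Rightarrow> real" and l :: real
  assumes "prob_space M"
    and "0 < l"
    and "prob_space.indep_vars M (\<lambda>_. borel) E UNIV"
    and "\<And>k. distributed M lborel (E k) (exponential_density l)"
  shows "(\<lambda>t. ln (measure M {\<omega> \<in> space M. prod_min_partial_sums E \<omega> \<le> t})
              + (sqrt (- ln t) - sqrt l)\<^sup>2)
         \<in> O[at_right 0](\<lambda>t. ln (- ln t))"
proof -
  interpret exponential_sequence M E l
    by (intro exponential_sequence.intro exponential_sequence_axioms.intro) (use assms in auto)
  define L0 where "L0 = max (max 3 (4 * l)) (4 / l)"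
  have "\<forall>\<^sub>F t in at_right 0. ln t \<le> - L0"
    using ln_at_0 by (simp add: filterlim_at_bot)
  moreover have "\<forall>\<^sub>F t in at_right 0. 0 < (t::real)"
    by (simp add: eventually_at_right_less)
  ultimately have "\<forall>\<^sub>F t in at_right 0. norm (ln (prob {\<omega>\<in>space M. X \<omega> \<le> t}) + (sqrt (- ln t) - sqrt l)\<^sup>2)
      \<le> (10 + l) * norm (ln (- ln t))"
  proof eventually_elim
    case (elim t)
    define L where "L = - ln t"
    have t: "t = exp (- L)" using elim by (simp add: L_def)
    have "3 \<le> L" "4 * l \<le> L" "4 / l \<le> L"
      using elim by (auto simp: L_def L0_def)
    then have L: "3 \<le> L" "4 * l \<le> L" "4 \<le> l * L"
      using rate_pos by (auto simp: pos_divide_le_eq mult.commute)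
    have "1 \<le> ln L" using exp_le L by (simp add: ln_ge_iff)
    then show ?case using abs_ln_prob_X_le_exp_le[OF L] by (simp add: t flip: L_def)
  qed
  then show ?thesis by (intro bigoI)
qed

end
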